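(* In the setting described in the context, let $D\subseteq A\subseteq D\cup T$. Let $L\in\Pi_A$ with $\dim\operatorname{span}\langle L,L^*\rangle_A=2|L|-1$. Let $[e_1,e_2]\in T\setminus A$ with $e_1\in L$. Then $[e_1,e_2]\notin\operatorname{span}\langle L,L^*\rangle_A$ if and only if $e_2\notin L^*_A$.
   Context: Let $n\ge4$, $V=\{0,\dots,n-1\}$, and let $E=\{(u,v)\in V\times V:u\ne v\}$ be the set of arcs, written $uv$. Let $\chi_e\in\mathbb R^E$ be unit vectors and $\chi_F=\sum_{e\in F}\chi_e$. Let $\delta^\pm(w)$ be the arcs leaving/entering $w$, let $\delta^+(S)=\{uv:u\in S,v\notin S\}$, let $\mathcal S=\{S\subset V:2\le|S|\le n-2\}$, and let $x(F)=\sum_{e\in F}x_e$. The polytope is $P^n=\{x\in\mathbb R^E: x(\delta^+(w))=x(\delta^-(w))=1\ \forall w,\ x(\delta^+(S))\ge1\ \forall S\in\mathcal S,\ x\ge0\}$. Fix $\bar x\in P^n\cap\{0,\tfrac12\}^E$ and let $E_{\bar x}=\{e:\bar x_e=\tfrac12\}$. For $a\in\{0,1\}^E$ let $\mathrm{pr}(a)=\sum_{e\in E_{\bar x}}a_e\chi_e$. Let $\mathcal S_{\bar x}=\{S\in\mathcal S:\bar x(\delta^+(S))=1\}$. Define the sets $$D=\{\mathrm{pr}(\chi_{\delta^+(u)}),\mathrm{pr}(\chi_{\delta^-(u)}):u\in V\}, \qquad T=\{\mathrm{pr}(\chi_{\delta^+(S)}):S\in\mathcal S_{\bar x}\}.$$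 Every vector of $D\cup T$ equals $\chi_{e_1}+\chi_{e_2}$ for two distinct arcs $e_1,e_2\in E_{\bar x}$; it is written $[e_1,e_2]=[e_2,e_1]$. Let $A$ be a set with $D\subseteq A\subseteq D\cup T$. On $E_{\bar x}$ define the relation $e\sim_A e'$ iff there is $\bar e\in E_{\bar x}$ with $[e,\bar e]\in A$ and $[\bar e,e']\in A$. Let $\equiv_A$ be its transitive closure; this is an equivalence relation. The equivalence classes are called circuits, and they form the circuit partition $\Pi_A$ of $E_{\bar x}$. For $L\in\Pi_A$, the set $\{\bar e\in E_{\bar x}:\exists e\in L,\ [e,\bar e]\in A\}$ is nonempty and contained in a unique circuit, denoted $L^*_A$ and called the dual of $L$. The pair $\{L,L^*_A\}$ is a circuit pair. $L$ is called shorted if $L^*_A=L$. Define $\langle L,L^*\rangle_A=\{[e,\bar e]\in A: e\in L,\ \bar e\in L^*_A\}$. *)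

theory Defs
  imports Complex_Main "HOL-Library.Function_Algebras"
begin

type_synonym arc = "nat \<times> nat"
type_synonym vect = "arc \<Rightarrow> real"

definition verts :: "nat \<Rightarrow> nat set" where
  "verts n = {0..<n}"

definition arcs :: "nat \<Rightarrow> arc set" where
  "arcs n = {(u,v). u < n \<and> v < n \<and> u \<noteq> v}"

definition chi :: "arc \<Rightarrow> vect" where
  "chi e = (\<lambda>a. if a = e then 1 else 0)"

definition chiF :: "arc set \<Rightarrow> vect" where
  "chiF F = (\<lambda>a. \<Sum>e\<in>F. chi e a)"

definition out_arcs :: "nat \<Rightarrow> nat \<Rightarrow> arc set" where
  "out_arcs n w = {e \<in> arcs n. fst e = w}"

definition in_arcs :: "nat \<Rightarrow> nat \<Rightarrow> arc set" where
  "in_arcs n w = {e \<in> arcs n. snd e = w}"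

definition cut_out :: "nat \<Rightarrow> nat set \<Rightarrow> arc set" where
  "cut_out n S = {e \<in> arcs n. fst e \<in> S \<and> snd e \<notin> S}"

definition Sfam :: "nat \<Rightarrow> nat set set" where
  "Sfam n = {S. S \<subseteq> verts n \<and> 2 \<le> card S \<and> card S \<le> n - 2}"

definition xsum :: "vect \<Rightarrow> arc set \<Rightarrow> real" where
  "xsum x F = (\<Sum>e\<in>F. x e)"

definition polytope :: "nat \<Rightarrow> vect set" where
  "polytope n = {x. (\<forall>e. e \<notin> arcs n \<longrightarrow> x e = 0)
     \<and> (\<forall>w\<in>verts n. xsum x (out_arcs n w) = 1 \<and> xsum x (in_arcs n w) = 1)
     \<and> (\<forall>S\<in>Sfam n. xsum x (cut_out n S) \<ge> 1)
     \<and> (\<forall>e\<in>arcs n. x e \<ge> 0)}"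

definition half_integral :: "nat \<Rightarrow> vect \<Rightarrow> bool" where
  "half_integral n x \<longleftrightarrow> (\<forall>e\<in>arcs n. x e = 0 \<or> x e = 1/2)"

definition Ex :: "nat \<Rightarrow> vect \<Rightarrow> arc set" where
  "Ex n x = {e \<in> arcs n. x e = 1/2}"

definition pr :: "nat \<Rightarrow> vect \<Rightarrow> vect \<Rightarrow> vect" where
  "pr n x a = (\<lambda>e. if e \<in> Ex n x then a e else 0)"

definition Sx :: "nat \<Rightarrow> vect \<Rightarrow> nat set set" where
  "Sx n x = {S \<in> Sfam n. xsum x (cut_out n S) = 1}"

definition Dset :: "nat \<Rightarrow> vect \<Rightarrow> vect set" where
  "Dset n x = {pr n x (chiF (out_arcs n u)) | u. u \<in> verts n}
            \<union> {pr n x (chiF (in_arcs n u)) | u. u \<in> verts n}"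

definition Tset :: "nat \<Rightarrow> vect \<Rightarrow> vect set" where
  "Tset n x = {pr n x (chiF (cut_out n S)) | S. S \<in> Sx n x}"

definition br :: "arc \<Rightarrow> arc \<Rightarrow> vect" where
  "br e1 e2 = chi e1 + chi e2"

definition sim_rel :: "nat \<Rightarrow> vect \<Rightarrow> vect set \<Rightarrow> arc rel" where
  "sim_rel n x A = {(e, e'). e \<in> Ex n x \<and> e' \<in> Ex n x \<and>
      (\<exists>eb\<in>Ex n x. br e eb \<in> A \<and> br eb e' \<in> A)}"

definition equiv_rel :: "nat \<Rightarrow> vect \<Rightarrow> vect set \<Rightarrow> arc rel" where
  "equiv_rel n x A = (sim_rel n x A)\<^sup>+"

definition circuits :: "nat \<Rightarrow> vect \<Rightarrow> vect set \<Rightarrow> arc set set" where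
  "circuits n x A = Ex n x // equiv_rel n x A"

definition nbrs :: "nat \<Rightarrow> vect \<Rightarrow> vect set \<Rightarrow> arc set \<Rightarrow> arc set" where
  "nbrs n x A L = {eb \<in> Ex n x. \<exists>e\<in>L. br e eb \<in> A}"

definition dual :: "nat \<Rightarrow> vect \<Rightarrow> vect set \<Rightarrow> arc set \<Rightarrow> arc set" where
  "dual n x A L = (THE M. M \<in> circuits n x A \<and> nbrs n x A L \<subseteq> M)"

definition pairs :: "nat \<Rightarrow> vect \<Rightarrow> vect set \<Rightarrow> arc set \<Rightarrow> vect set" where
  "pairs n x A L = {v \<in> A. \<exists>e\<in>L. \<exists>eb\<in>dual n x A L. v = br e eb}"

definition fscale :: "real \<Rightarrow> vect \<Rightarrow> vect" where
  "fscale c f = (\<lambda>a. c * f a)"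

abbreviation fspan :: "vect set \<Rightarrow> vect set" where
  "fspan \<equiv> module.span fscale"

abbreviation fdim :: "vect set \<Rightarrow> nat" where
  "fdim \<equiv> vector_space.dim fscale"

lemma vector_space_fscale: "vector_space fscale"
  by unfold_locales (auto simp: fscale_def algebra_simps plus_fun_def)

end

theory Submission
  imports Defs
begin

text \<open>
  Every vertex has exactly two outgoing half-arcs, so each half-arc \<open>e\<close> has an
  out-partner \<open>e'\<close> with \<open>[e,e'] \<in> D\<close>.  This partner map sends the dual circuit
  \<open>L\<^sup>*\<close> injectively into \<open>L\<close>, so \<open>|L\<^sup>*| \<le> |L|\<close>.  If \<open>e\<^sub>2 \<in> L\<^sup>*\<close>, the brackets
  \<open>[e,f]\<close> with \<open>e \<in> L\<close>, \<open>f \<in> L\<^sup>*\<close> span a space of dimension at most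
  \<open>|L| + |L\<^sup>*| - 1 \<le> 2|L| - 1\<close>, which is already the dimension of
  \<open>span \<langle>L,L\<^sup>*\<rangle>\<close>; hence \<open>[e\<^sub>1,e\<^sub>2]\<close> lies in that span.  If \<open>e\<^sub>2 \<notin> L\<^sup>*\<close>, a linear
  functional vanishing on \<open>\<langle>L,L\<^sup>*\<rangle>\<close> separates \<open>[e\<^sub>1,e\<^sub>2]\<close>: the coordinate \<open>e\<^sub>2\<close> when
  \<open>e\<^sub>2 \<notin> L\<close>, and the difference of the coordinate sums over \<open>L\<close> and over the
  (then disjoint) circuit \<open>L\<^sup>*\<close> when \<open>e\<^sub>2 \<in> L\<close>.
\<close>

lemma br_comm: "br a b = br b a"
  by (simp add: br_def add.commute)

lemma br_apply: "br a b c = (if c = a then 1 else 0) + (if c = b then 1 else 0)"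
  by (simp add: br_def chi_def)

lemma chiF_apply: "finite F \<Longrightarrow> chiF F a = (if a \<in> F then 1 else 0)"
  by (simp add: chiF_def chi_def)

lemma finite_arcs: "finite (arcs n)"
  by (rule finite_subset[of _ "{0..<n} \<times> {0..<n}"]) (auto simp: arcs_def)

lemma finite_Ex: "finite (Ex n x)"
  using finite_arcs by (rule finite_subset[rotated]) (auto simp: Ex_def)

lemma br_in_Tset_distinct:
  assumes "br e1 e2 \<in> Tset n x"
  shows "e1 \<noteq> e2"
proof
  assume "e1 = e2"
  then have "br e1 e2 e1 = 2" by (simp add: br_apply)
  moreover obtain S where "br e1 e2 = pr n x (chiF (cut_out n S))"
    using assms by (auto simp: Tset_def)
  moreover have "finite (cut_out n S)"
    using finite_arcs by (rule finite_subset[rotated]) (auto simp: cut_out_def)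
  ultimately show False by (auto simp: pr_def chiF_apply split: if_splits)
qed

lemma sym_sim_rel: "sym (sim_rel n x A)"
  by (auto simp: sym_def sim_rel_def br_comm)

lemma equiv_rel_subset_Ex: "equiv_rel n x A \<subseteq> Ex n x \<times> Ex n x"
  unfolding equiv_rel_def by (rule trancl_subset_Sigma) (auto simp: sim_rel_def)

lemma equiv_rel_extend_brackets:
  assumes "(a, b) \<in> equiv_rel n x A" "c \<in> Ex n x" "d \<in> Ex n x" "br c a \<in> A" "br b d \<in> A"
  shows "(c, d) \<in> equiv_rel n x A"
  using assms unfolding equiv_rel_def
proof (induction arbitrary: d rule: trancl_induct)
  case (base b)
  then obtain f where "f \<in> Ex n x" "br a f \<in> A" "br f b \<in> A" "a \<in> Ex n x" "b \<in> Ex n x"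
    by (auto simp: sim_rel_def)
  with base have "(c, f) \<in> sim_rel n x A" "(f, d) \<in> sim_rel n x A"
    by (auto simp: sim_rel_def)
  then show ?case by auto
next
  case (step b b')
  then obtain f where "f \<in> Ex n x" "br b f \<in> A" "br f b' \<in> A" "b' \<in> Ex n x"
    by (auto simp: sim_rel_def)
  with step have "(c, f) \<in> (sim_rel n x A)\<^sup>+" "(f, d) \<in> sim_rel n x A"
    by (auto simp: sim_rel_def)
  then show ?case by auto
qed

lemma quotient_eq_class:
  assumes "equiv A r" "X \<in> A // r" "a \<in> X"
  shows "X = r `` {a}"
proof -
  obtain c where "X = r `` {c}" using assms(2) by (rule quotientE)
  with assms show ?thesis by (metis Image_singleton_iff equiv_class_eq)
qed

locale half_integral_point =
  fixes n :: nat and x :: vect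
  assumes in_polytope: "x \<in> polytope n" and is_half_integral: "half_integral n x"
begin

lemma card_Ex_same_tail:
  assumes e: "e \<in> Ex n x"
  shows "card {f \<in> Ex n x. fst f = fst e} = 2"
proof -
  let ?H = "{f \<in> Ex n x. fst f = fst e}"
  have "fst e \<in> verts n" using e by (auto simp: Ex_def arcs_def verts_def)
  have "real (card ?H) / 2 = (\<Sum>f\<in>?H. 1 / 2)" by simp
  also have "\<dots> = (\<Sum>f\<in>?H. x f)"
    by (rule sum.cong) (auto simp: Ex_def)
  also have "\<dots> = xsum x (out_arcs n (fst e))"
    unfolding xsum_def
    by (rule sum.mono_neutral_left)
       (use finite_arcs is_half_integral in
         \<open>auto simp: half_integral_def Ex_def out_arcs_def intro: finite_subset\<close>)
  also have "\<dots> = 1"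
    using \<open>fst e \<in> verts n\<close> in_polytope by (auto simp: polytope_def)
  finally show ?thesis by simp
qed

definition out_partner :: "arc \<Rightarrow> arc" where
  "out_partner e = (THE f. f \<in> Ex n x \<and> f \<noteq> e \<and> fst f = fst e)"

lemma Ex_same_tail_eq:
  assumes e: "e \<in> Ex n x"
  shows "{f \<in> Ex n x. fst f = fst e} = {e, out_partner e}" and "out_partner e \<noteq> e"
proof -
  let ?H = "{g \<in> Ex n x. fst g = fst e}"
  have "card (?H - {e}) = 1" using card_Ex_same_tail[OF e] e by simp
  then obtain f where "?H - {e} = {f}" by (auto simp: card_1_singleton_iff)
  then have f: "?H = {e, f}" "f \<noteq> e" using e by auto
  then have "out_partner e = f"
    unfolding out_partner_def by (intro the_equality) blast+
  with f show "{g \<in> Ex n x. fst g = fst e} = {e, out_partner e}" "out_partner e \<noteq> e" by auto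
qed

lemma out_partner_in_Ex: "e \<in> Ex n x \<Longrightarrow> out_partner e \<in> Ex n x"
  and fst_out_partner: "e \<in> Ex n x \<Longrightarrow> fst (out_partner e) = fst e"
  using Ex_same_tail_eq(1) by blast+

lemma out_partner_neq: "e \<in> Ex n x \<Longrightarrow> out_partner e \<noteq> e"
  by (rule Ex_same_tail_eq(2))

lemma inj_on_out_partner: "inj_on out_partner (Ex n x)"
proof
  fix a b assume a: "a \<in> Ex n x" and b: "b \<in> Ex n x" and eq: "out_partner a = out_partner b"
  have "fst b = fst a" by (metis fst_out_partner a b eq)
  with b have "b \<in> {f \<in> Ex n x. fst f = fst a}" by simp
  then have "b \<in> {a, out_partner a}" by (simp only: Ex_same_tail_eq(1)[OF a])
  moreover have "b \<noteq> out_partner b" using out_partner_neq[OF b] by (rule not_sym)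
  ultimately show "a = b" using eq by blast
qed

lemma pr_out_arcs_eq_br:
  assumes e: "e \<in> Ex n x"
  shows "pr n x (chiF (out_arcs n (fst e))) = br e (out_partner e)"
proof
  fix a
  have "finite (out_arcs n (fst e))"
    using finite_arcs by (rule finite_subset[rotated]) (auto simp: out_arcs_def)
  then have "pr n x (chiF (out_arcs n (fst e))) a
      = (if a \<in> {f \<in> Ex n x. fst f = fst e} then 1 else 0)"
    by (auto simp: pr_def chiF_apply Ex_def out_arcs_def)
  then show "pr n x (chiF (out_arcs n (fst e))) a = br e (out_partner e) a"
    using Ex_same_tail_eq[OF e] by (simp add: br_apply)
qed

end

locale circuit_system = half_integral_point +
  fixes A :: "vect set"
  assumes Dset_subset: "Dset n x \<subseteq> A"
begin

abbreviation R :: "arc rel" where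
  "R \<equiv> equiv_rel n x A"

lemma br_out_partner_in_A:
  assumes e: "e \<in> Ex n x"
  shows "br e (out_partner e) \<in> A"
proof -
  have "fst e \<in> verts n" using e by (auto simp: Ex_def arcs_def verts_def)
  then have "pr n x (chiF (out_arcs n (fst e))) \<in> Dset n x" by (auto simp: Dset_def)
  then show ?thesis using Dset_subset pr_out_arcs_eq_br[OF e] by auto
qed

lemma equiv_equiv_rel: "equiv (Ex n x) R"
proof (rule equivI)
  show "R \<subseteq> Ex n x \<times> Ex n x" by (rule equiv_rel_subset_Ex)
  show "sym R" unfolding equiv_rel_def by (rule sym_trancl[OF sym_sim_rel])
  show "trans R" unfolding equiv_rel_def by simp
  have "(e, e) \<in> sim_rel n x A" if "e \<in> Ex n x" for e
    using that out_partner_in_Ex[OF that] br_out_partner_in_A[OF that]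
      br_comm[of "out_partner e" e] by (auto simp: sim_rel_def)
  then show "refl_on (Ex n x) R"
    using equiv_rel_subset_Ex by (auto simp: refl_on_def equiv_rel_def)
qed

lemma circuit_subset_Ex: "L \<in> circuits n x A \<Longrightarrow> L \<subseteq> Ex n x"
  using in_quotient_imp_subset[OF equiv_equiv_rel] by (simp add: circuits_def)

lemma finite_circuit: "L \<in> circuits n x A \<Longrightarrow> finite L"
  using circuit_subset_Ex finite_Ex by (rule finite_subset)

lemma dual_eq_class:
  assumes L: "L \<in> circuits n x A" and e: "e \<in> L"
  shows "dual n x A L = R `` {out_partner e}"
  unfolding dual_def
proof (rule the_equality)
  have eE: "e \<in> Ex n x" using circuit_subset_Ex[OF L] e by blast
  have "R `` {out_partner e} \<in> circuits n x A"
    unfolding circuits_def by (rule quotientI[OF out_partner_in_Ex[OF eE]])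
  moreover have "nbrs n x A L \<subseteq> R `` {out_partner e}"
  proof
    fix f assume "f \<in> nbrs n x A L"
    then obtain e' where "e' \<in> L" "f \<in> Ex n x" "br e' f \<in> A" by (auto simp: nbrs_def)
    moreover have "(e, e') \<in> R"
      using L e \<open>e' \<in> L\<close> in_quotient_imp_in_rel[OF equiv_equiv_rel] by (auto simp: circuits_def)
    ultimately show "f \<in> R `` {out_partner e}"
      using equiv_rel_extend_brackets[where a = e and b = e'] out_partner_in_Ex[OF eE]
        br_out_partner_in_A[OF eE]
      by (auto simp: br_comm)
  qed
  ultimately show
    "R `` {out_partner e} \<in> circuits n x A \<and> nbrs n x A L \<subseteq> R `` {out_partner e}" ..
  fix M assume M: "M \<in> circuits n x A \<and> nbrs n x A L \<subseteq> M"
  have "out_partner e \<in> nbrs n x A L"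
    using e out_partner_in_Ex[OF eE] br_out_partner_in_A[OF eE] by (auto simp: nbrs_def)
  then have "out_partner e \<in> M" using M by auto
  then show "M = R `` {out_partner e}"
    using M quotient_eq_class[OF equiv_equiv_rel] by (simp add: circuits_def)
qed

lemma dual_in_circuits:
  assumes "L \<in> circuits n x A" "e \<in> L"
  shows "dual n x A L \<in> circuits n x A"
  using assms circuit_subset_Ex
  by (auto simp: dual_eq_class circuits_def intro!: quotientI out_partner_in_Ex)

lemma out_partner_dual_in_circuit:
  assumes L: "L \<in> circuits n x A" and e: "e \<in> L" and f: "f \<in> dual n x A L"
  shows "out_partner f \<in> L"
proof -
  have eE: "e \<in> Ex n x" using circuit_subset_Ex[OF L] e by blast
  have fE: "f \<in> Ex n x" and "(out_partner e, f) \<in> R"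
    using f equiv_rel_subset_Ex by (auto simp: dual_eq_class[OF L e])
  then have "(e, out_partner f) \<in> R"
    using equiv_rel_extend_brackets
        [where a = "out_partner e" and b = f and c = e and d = "out_partner f"]
      out_partner_in_Ex[OF fE] br_out_partner_in_A[OF eE] br_out_partner_in_A[OF fE] eE
    by blast
  then show ?thesis
    using L e in_quotient_imp_closed[OF equiv_equiv_rel] by (auto simp: circuits_def)
qed

lemma card_dual_le:
  assumes L: "L \<in> circuits n x A" and e: "e \<in> L"
  shows "card (dual n x A L) \<le> card L"
proof (rule card_inj_on_le)
  have "dual n x A L \<subseteq> Ex n x" by (rule circuit_subset_Ex[OF dual_in_circuits[OF L e]])
  then show "inj_on out_partner (dual n x A L)"
    using inj_on_out_partner by (rule inj_on_subset[rotated])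
  show "out_partner ` dual n x A L \<subseteq> L" using out_partner_dual_in_circuit[OF L e] by auto
  show "finite L" using L by (rule finite_circuit)
qed

end

text \<open>The library's \<open>dim_insert\<close> needs finite dimension, which \<open>vect\<close> lacks.\<close>

context vector_space
begin

lemma dim_insert_notin_span:
  assumes S: "finite S" and a: "a \<notin> span S"
  shows "dim (insert a S) = Suc (dim S)"
proof -
  obtain B where B: "B \<subseteq> S" "independent B" "S \<subseteq> span B" "card B = dim S"
    by (rule basis_exists)
  have aB: "a \<notin> span B" using a span_mono[OF B(1)] by blast
  show ?thesis
  proof (rule dim_unique)
    show "insert a B \<subseteq> insert a S" using B(1) by blast
    show "insert a S \<subseteq> span (insert a B)"
      using B(3) span_mono[of B "insert a B"] span_base[of a "insert a B"] by blast
    show "independent (insert a B)" using aB B(2) by (rule independent_insertI)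
    have "a \<notin> B" using aB span_base by blast
    then show "card (insert a B) = Suc (dim S)"
      using B(4) finite_subset[OF B(1) S] by simp
  qed
qed

end

interpretation vs: vector_space fscale
  by (rule vector_space_fscale)

lemma span_subset_sum_eq:
  "S \<subseteq> {v. sum v P = sum v Q} \<Longrightarrow> fspan S \<subseteq> {v. sum v P = sum v Q}"
  by (rule vs.span_minimal)
     (auto simp: vs.subspace_def fscale_def sum.distrib sum_distrib_left[symmetric])

definition brackets :: "arc set \<Rightarrow> arc set \<Rightarrow> vect set" where
  "brackets L M = (\<lambda>(e, f). br e f) ` (L \<times> M)"

lemma br_in_brackets: "e \<in> L \<Longrightarrow> f \<in> M \<Longrightarrow> br e f \<in> brackets L M"
  by (auto simp: brackets_def)

lemma bracketsE:
  assumes "v \<in> brackets L M"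
  obtains e f where "e \<in> L" "f \<in> M" "v = br e f"
  using assms by (auto simp: brackets_def)

lemma finite_brackets: "finite L \<Longrightarrow> finite M \<Longrightarrow> finite (brackets L M)"
  by (simp add: brackets_def)

lemma brackets_apply_outside: "v \<in> brackets L M \<Longrightarrow> c \<notin> L \<Longrightarrow> c \<notin> M \<Longrightarrow> v c = 0"
  by (erule bracketsE) (auto simp: br_apply)

lemma sum_brackets_eq:
  assumes "finite L" "finite M" "L \<inter> M = {}" "v \<in> brackets L M"
  shows "sum v L = sum v M"
  using assms(4)
proof (rule bracketsE)
  fix e f assume "e \<in> L" "f \<in> M" "v = br e f"
  with assms(1-3) show ?thesis by (auto simp: br_apply sum.distrib)
qed

text \<open>With \<open>b \<in> M\<close> fixed, every \<open>[e,f]\<close> is \<open>(\<chi>\<^sub>e + \<chi>\<^sub>b) + (\<chi>\<^sub>f - \<chi>\<^sub>b)\<close>.\<close>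

lemma dim_brackets_le:
  assumes L: "finite L" and M: "finite M" and b: "b \<in> M" and W: "W \<subseteq> brackets L M"
  shows "fdim W \<le> card L + card M - 1"
proof -
  define B where "B = (\<lambda>e. chi e + chi b) ` L \<union> (\<lambda>f. chi f - chi b) ` (M - {b})"
  have "W \<subseteq> fspan B"
  proof
    fix w assume "w \<in> W"
    then obtain e f where ef: "e \<in> L" "f \<in> M" "w = br e f" using W by (blast elim: bracketsE)
    have eb: "chi e + chi b \<in> fspan B" using ef by (auto simp: B_def intro: vs.span_base)
    show "w \<in> fspan B"
    proof (cases "f = b")
      case True
      then show ?thesis using eb ef by (simp add: br_def)
    next
      case False
      then have "chi f - chi b \<in> fspan B" using ef by (auto simp: B_def intro: vs.span_base)
      with eb have "(chi e + chi b) + (chi f - chi b) \<in> fspan B" by (rule vs.span_add)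
      moreover have "(chi e + chi b) + (chi f - chi b) = w" using ef by (simp add: br_def)
      ultimately show ?thesis by simp
    qed
  qed
  then have "fdim W \<le> card B" by (rule vs.dim_le_card) (simp add: B_def L M)
  also have "card B
      \<le> card ((\<lambda>e. chi e + chi b) ` L) + card ((\<lambda>f. chi f - chi b) ` (M - {b}))"
    unfolding B_def by (rule card_Un_le)
  also have "\<dots> \<le> card L + card (M - {b})"
    using L M by (intro add_mono card_image_le) auto
  also have "card (M - {b}) = card M - 1" using M b by simp
  finally have "fdim W \<le> card L + (card M - 1)" .
  moreover have "card M > 0" using M b card_gt_0_iff by blast
  ultimately show ?thesis by linarith
qed

lemma pairs_subset_brackets: "pairs n x A L \<subseteq> brackets L (dual n x A L)"
  by (auto simp: pairs_def brackets_def)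

context circuit_system
begin

lemma br_in_span_pairs_if_in_dual:
  assumes L: "L \<in> circuits n x A" and dim: "fdim (fspan (pairs n x A L)) = 2 * card L - 1"
    and e1: "e1 \<in> L" and e2: "e2 \<in> dual n x A L"
  shows "br e1 e2 \<in> fspan (pairs n x A L)"
proof (rule ccontr)
  let ?P = "pairs n x A L" and ?M = "dual n x A L"
  assume notin: "br e1 e2 \<notin> fspan ?P"
  have finL: "finite L" and finM: "finite ?M"
    using finite_circuit[OF L] finite_circuit[OF dual_in_circuits[OF L e1]] .
  have P: "?P \<subseteq> brackets L ?M" by (rule pairs_subset_brackets)
  then have finP: "finite ?P" using finite_brackets[OF finL finM] by (rule finite_subset)
  have "insert (br e1 e2) ?P \<subseteq> brackets L ?M" using P br_in_brackets[OF e1 e2] by blast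
  then have "fdim (insert (br e1 e2) ?P) \<le> card L + card ?M - 1"
    by (rule dim_brackets_le[OF finL finM e2])
  moreover have "fdim (insert (br e1 e2) ?P) = Suc (fdim ?P)"
    by (rule vs.dim_insert_notin_span[OF finP notin])
  moreover have "card ?M \<le> card L" by (rule card_dual_le[OF L e1])
  ultimately show False using dim by simp
qed

lemma br_notin_span_pairs_if_notin_dual:
  assumes L: "L \<in> circuits n x A" and e1: "e1 \<in> L" and e2: "e2 \<notin> dual n x A L"
    and e12: "e1 \<noteq> e2"
  shows "br e1 e2 \<notin> fspan (pairs n x A L)"
proof (cases "e2 \<in> L")
  case False
  have "pairs n x A L \<subseteq> {v. sum v {e2} = sum v {}}"
    using pairs_subset_brackets brackets_apply_outside False e2 by fastforce
  then have "fspan (pairs n x A L) \<subseteq> {v. sum v {e2} = sum v {}}"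
    by (rule span_subset_sum_eq)
  moreover have "br e1 e2 e2 = 1" using e12 by (simp add: br_apply)
  ultimately show ?thesis by auto
next
  case True
  let ?M = "dual n x A L"
  have finL: "finite L" and finM: "finite ?M"
    using finite_circuit[OF L] finite_circuit[OF dual_in_circuits[OF L e1]] .
  have disj: "L \<inter> ?M = {}"
    using quotient_disj[OF equiv_equiv_rel] L dual_in_circuits[OF L e1] True e2
    unfolding circuits_def by blast
  have "pairs n x A L \<subseteq> {v. sum v L = sum v ?M}"
    using pairs_subset_brackets sum_brackets_eq[OF finL finM disj] by blast
  then have "fspan (pairs n x A L) \<subseteq> {v. sum v L = sum v ?M}"
    by (rule span_subset_sum_eq)
  moreover have "sum (br e1 e2) L = 2"
    using finL e1 True e12 by (simp add: br_def chi_def sum.distrib)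
  moreover have "sum (br e1 e2) ?M = 0"
    using finM e1 e2 disj by (auto simp: br_def chi_def sum.distrib)
  ultimately show ?thesis by fastforce
qed

end

theorem mainTheorem7:
  fixes n :: nat and xb :: vect and A :: "vect set" and L :: "arc set" and e1 e2 :: arc
  assumes "n \<ge> 4"
    and "xb \<in> polytope n"
    and "half_integral n xb"
    and "Dset n xb \<subseteq> A" and "A \<subseteq> Dset n xb \<union> Tset n xb"
    and "L \<in> circuits n xb A"
    and "fdim (fspan (pairs n xb A L)) = 2 * card L - 1"
    and "br e1 e2 \<in> Tset n xb - A"
    and "e1 \<in> L"
  shows "br e1 e2 \<notin> fspan (pairs n xb A L) \<longleftrightarrow> e2 \<notin> dual n xb A L"
proof -
  interpret circuit_system n xb A
    using assms(2-4) by unfold_locales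
  \<comment> \<open>Of the hypotheses on \<open>[e\<^sub>1,e\<^sub>2]\<close> only \<open>[e\<^sub>1,e\<^sub>2] \<in> T\<close> matters, via \<open>e\<^sub>1 \<noteq> e\<^sub>2\<close>.\<close>
  have "e1 \<noteq> e2" using assms(8) br_in_Tset_distinct by blast
  then show ?thesis
    using br_in_span_pairs_if_in_dual[OF assms(6,7,9)]
      br_notin_span_pairs_if_notin_dual[OF assms(6,9)] by blast
qed

end
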